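(* Consider problem (rank-MOA) $\min\{f(X):\mathcal{A}(X)=b,\ \operatorname{rank}(X)\le r\}$ and let $X\in\mathcal{L}\cap\mathcal{M}(r)$ with $s=\operatorname{rank}(X)$ and SVD $X=U\Sigma V^\top$ as in the context. (i) If $X$ is a local minimizer and Assumption 1 holds at $X$, then $X$ is an $M$-stationary point. (ii) If $f$ is convex and $X$ is an $M$-stationary point, then $f(X)\le f(Y)$ for all $Y\in\mathcal{L}\cap\mathcal{M}_X(\Gamma)$, where $\mathcal{M}_X(\Gamma)=\{UBV_\Gamma^\top:B\in\mathbb{R}^{m\times s}\}$.
   Context: $0\le r<n\le m$. $\langle X,Y\rangle=\sum_{i,j}X_{ij}Y_{ij}$. $f:\mathbb{R}^{m\times n}\to\mathbb{R}$ continuously differentiable; $A^1,\dots,A^l\in\mathbb{R}^{m\times n}$, $b\in\mathbb{R}^l$, $\mathcal{A}(X)=(\langle A^1,X\rangle,\dots,\langle A^l,X\rangle)^\top$, $\mathcal{L}=\{X:\mathcal{A}(X)=b\}$, $\mathcal{M}(r)=\{X:\operatorname{rank}X\le r\}$. Lagrangian $L(X;y)=f(X)+\sum_{i=1}^ly_i(\langle A^i,X\rangle-b_i)$. For closed $\Omega$, $X\in\Omega$: $\mathrm{T}^B_\Omega(X)$ is the set of $\Xi$ with $X^k\in\Omega$, $X^k\to X$, $t_k\downarrow0$, $(X^k-X)/t_k\to\Xi$; $\mathrm{N}^F_\Omega(X)=\{Y:\langle Y,\Xi\rangle\le0\ \forall\Xi\in\mathrm{T}^B_\Omega(X)\}$;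 the Mordukhovich normal cone $\mathrm{N}^M_\Omega(X)$ is the set of limits of sequences $W^k\in\mathrm{N}^F_\Omega(X^k)$ with $X^k\in\Omega$, $X^k\to X$. $X$ is an $M$-stationary point of (rank-MOA) if $\mathcal{A}(X)=b$, $X\in\mathcal{M}(r)$ and there is $y\in\mathbb{R}^l$ with $-\nabla_XL(X;y)\in\mathrm{N}^M_{\mathcal{M}(r)}(X)$ (for $X$ of rank $s$ this cone equals $\{U_{\Gamma_m^\perp}DV_{\Gamma_n^\perp}^\top: D\in\mathbb{R}^{(m-s)\times(n-s)},\ \operatorname{rank}D\le n-r\}$). SVD convention: $X=U\Sigma V^\top$, $U$, $V$ orthogonal of sizes $m$, $n$, $\Sigma$ with diagonal $\sigma_1\ge\dots\ge\sigma_s>0$ followed by zeros, $\Gamma=\{1,\dots,s\}$, $\Gamma_m^\perp=\{s+1,\dots,m\}$, $\Gamma_n^\perp=\{s+1,\dots,n\}$, $U_J,V_J$ column submatrices indexed by $J$. $T^i_X=\begin{bmatrix}U_\Gamma^\top A^iV_\Gamma & U_\Gamma^\top A^iV_{\Gamma_n^\perp}\\ U_{\Gamma_m^\perp}^\top A^iV_\Gamma & O\end{bmatrix}$; Assumption 1 at $X$: $T^1_X,\dots,T^l_X$ linearly independent. *)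

theory Defs
  imports "HOL-Analysis.Analysis"
begin

text \<open>Position (0-based) of an index in a finite linearly ordered index type;
  index k of the paper corresponds to position k-1.\<close>
definition pos :: "'a::{finite,linorder} \<Rightarrow> nat" where
  "pos i = card {k. k < i}"

definition bouligand_tangent :: "'a::real_normed_vector set \<Rightarrow> 'a \<Rightarrow> 'a set" where
  "bouligand_tangent \<Omega> X = {\<Xi>. \<exists>Xs t. (\<forall>k. Xs k \<in> \<Omega>) \<and> Xs \<longlonglongrightarrow> X \<and>
      (\<forall>k. t k > 0) \<and> t \<longlonglongrightarrow> 0 \<and> (\<lambda>k. (Xs k - X) /\<^sub>R t k) \<longlonglongrightarrow> \<Xi>}"

definition frechet_normal :: "'a::real_inner set \<Rightarrow> 'a \<Rightarrow> 'a set" where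
  "frechet_normal \<Omega> X = {Y. \<forall>\<Xi>\<in>bouligand_tangent \<Omega> X. Y \<bullet> \<Xi> \<le> 0}"

definition mordukhovich_normal :: "'a::real_inner set \<Rightarrow> 'a \<Rightarrow> 'a set" where
  "mordukhovich_normal \<Omega> X = {W. \<exists>Xs Ws. (\<forall>k. Xs k \<in> \<Omega>) \<and> Xs \<longlonglongrightarrow> X \<and>
      (\<forall>k. Ws k \<in> frechet_normal \<Omega> (Xs k)) \<and> Ws \<longlonglongrightarrow> W}"

definition rank_set :: "nat \<Rightarrow> (real^'n^'m) set" where
  "rank_set r = {X. rank X \<le> r}"

text \<open>Affine set L = {X. A(X) = b}, constraints indexed by i < l.
  The Frobenius inner product on real^'n^'m is the inner product \<bullet>.\<close>
definition affine_set :: "nat \<Rightarrow> (nat \<Rightarrow> real^'n^'m) \<Rightarrow> (nat \<Rightarrow> real) \<Rightarrow> (real^'n^'m) set" where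
  "affine_set l A b = {X. \<forall>i<l. A i \<bullet> X = b i}"

definition lagrangian_grad ::
  "(real^'n^'m \<Rightarrow> real^'n^'m) \<Rightarrow> nat \<Rightarrow> (nat \<Rightarrow> real^'n^'m) \<Rightarrow> real^'n^'m \<Rightarrow> (nat \<Rightarrow> real) \<Rightarrow> real^'n^'m" where
  "lagrangian_grad gradf l A X y = gradf X + (\<Sum>i<l. y i *\<^sub>R A i)"

definition M_stationary ::
  "(real^'n^'m \<Rightarrow> real^'n^'m) \<Rightarrow> nat \<Rightarrow> (nat \<Rightarrow> real^'n^'m) \<Rightarrow> (nat \<Rightarrow> real) \<Rightarrow> nat \<Rightarrow> real^'n^'m \<Rightarrow> bool" where
  "M_stationary gradf l A b r X \<longleftrightarrow> X \<in> affine_set l A b \<and> X \<in> rank_set r \<and>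
     (\<exists>y. - lagrangian_grad gradf l A X y \<in> mordukhovich_normal (rank_set r) X)"

definition local_minimizer ::
  "(real^'n^'m \<Rightarrow> real) \<Rightarrow> nat \<Rightarrow> (nat \<Rightarrow> real^'n^'m) \<Rightarrow> (nat \<Rightarrow> real) \<Rightarrow> nat \<Rightarrow> real^'n^'m \<Rightarrow> bool" where
  "local_minimizer f l A b r X \<longleftrightarrow> X \<in> affine_set l A b \<inter> rank_set r \<and>
     (\<exists>\<epsilon>>0. \<forall>Y\<in>affine_set l A b \<inter> rank_set r. dist Y X < \<epsilon> \<longrightarrow> f X \<le> f Y)"

definition is_svd :: "real^'n::{finite,linorder}^'m::{finite,linorder} \<Rightarrow> nat \<Rightarrow> real^'m::{finite,linorder}^'m::{finite,linorder} \<Rightarrow> (nat \<Rightarrow> real)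
   \<Rightarrow> real^'n::{finite,linorder}^'n::{finite,linorder} \<Rightarrow> bool" where
  "is_svd X s U \<sigma> V \<longleftrightarrow> orthogonal_matrix U \<and> orthogonal_matrix V \<and>
     (\<forall>k<s. \<sigma> k > 0) \<and> (\<forall>j k. j \<le> k \<and> k < s \<longrightarrow> \<sigma> k \<le> \<sigma> j) \<and>
     X = U ** (\<chi> i j. if pos i = pos j \<and> pos i < s then \<sigma> (pos i) else 0) ** transpose V"

text \<open>T^i_X written as an m\<times>n matrix: the blocks of U^T A^i V with the
  (\<Gamma>_m^\<perp>,\<Gamma>_n^\<perp>) block replaced by O.\<close>
definition T_mat :: "nat \<Rightarrow> real^'m::{finite,linorder}^'m::{finite,linorder} \<Rightarrow> real^'n::{finite,linorder}^'n::{finite,linorder}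
    \<Rightarrow> real^'n::{finite,linorder}^'m::{finite,linorder} \<Rightarrow> real^'n::{finite,linorder}^'m::{finite,linorder}" where
  "T_mat s U V Ai = (\<chi> i j. if s \<le> pos i \<and> s \<le> pos j then 0 else (transpose U ** Ai ** V) $ i $ j)"

definition assumption1 :: "nat \<Rightarrow> real^'m::{finite,linorder}^'m::{finite,linorder} \<Rightarrow> real^'n::{finite,linorder}^'n::{finite,linorder}
    \<Rightarrow> nat \<Rightarrow> (nat \<Rightarrow> real^'n::{finite,linorder}^'m::{finite,linorder}) \<Rightarrow> bool" where
  "assumption1 s U V l A \<longleftrightarrow>
     (\<forall>c. (\<Sum>i<l. c i *\<^sub>R T_mat s U V (A i)) = 0 \<longrightarrow> (\<forall>i<l. c i = 0))"

text \<open>M_X(\<Gamma>) = {U B V_\<Gamma>^T : B \<in> R^{m\<times>s}}, written as U [B O] V^T.\<close>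
definition M_Gamma :: "nat \<Rightarrow> real^'m::{finite,linorder}^'m::{finite,linorder} \<Rightarrow> real^'n::{finite,linorder}^'n::{finite,linorder}
    \<Rightarrow> (real^'n::{finite,linorder}^'m::{finite,linorder}) set" where
  "M_Gamma s U V = {U ** B ** transpose V | B. \<forall>i j. s \<le> pos j \<longrightarrow> B $ i $ j = 0}"

end

theory Submission
  imports Defs
begin

text \<open>
  A Mordukhovich normal \<open>W\<close> to \<open>\<M>(r)\<close> at \<open>X\<close> satisfies \<open>X\<^sup>T W = 0\<close> and \<open>W X\<^sup>T = 0\<close>: this
  already holds for Fr\'echet normals at every \<open>Z \<in> \<M>(r)\<close>, because \<open>Z + t Z C\<close> and \<open>Z + t C Z\<close>
  stay in \<open>\<M>(r)\<close>, and it passes to limits. In SVD coordinates, \<open>U\<^sup>T W V\<close> then vanishes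
  outside the \<open>(\<Gamma>\<^sub>m\<^sup>\<perp>, \<Gamma>\<^sub>n\<^sup>\<perp>)\<close> block.

  (ii) Hence \<open>-\<nabla>\<^sub>XL(X;y)\<close> is orthogonal to \<open>\<M>\<^sub>X(\<Gamma>) - X\<close>; the \<open>A\<^sup>i\<close> are orthogonal to
  \<open>\<L> - X\<close>, so \<open>\<nabla>f(X)\<close> is orthogonal to \<open>Y - X\<close> and convexity gives \<open>f X \<le> f Y\<close>.

  (i) Minimizers of the penalized problems \<open>f + k \<parallel>\<A>(\<cdot>) - b\<parallel>\<^sup>2 + \<parallel>\<cdot> - X\<parallel>\<^sup>2\<close> over
  \<open>\<M>(r) \<inter> B(X, \<delta>)\<close> converge to \<open>X\<close> and satisfy Fermat's rule with Fr\'echet normals. Normalizing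
  the multipliers and passing to the limit (\<open>\<M>(r)\<close> is closed) yields a Fritz John condition
  with limiting normals. In its abnormal case some \<open>-\<Sum>\<^sub>i y\<^sub>i A\<^sup>i \<noteq> 0\<close> would be a limiting
  normal, forcing \<open>\<Sum>\<^sub>i y\<^sub>i T\<^sup>i\<^sub>X = 0\<close>, which Assumption 1 excludes.
\<close>

lemma inner_matrix_mult_left:
  fixes A :: "real^'n^'m" and B :: "real^'k^'m" and C :: "real^'n^'k"
  shows "A \<bullet> (B ** C) = (transpose B ** A) \<bullet> C"
  unfolding inner_vec_def matrix_matrix_mult_def transpose_def
  apply (simp add: sum_distrib_left sum_distrib_right mult_ac sum.swap[of _ "UNIV::'m set"])
  apply (rule sum.cong[OF refl], rule sum.swap)
  done

lemma inner_matrix_mult_right: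
  fixes A :: "real^'n^'m" and C :: "real^'k^'m" and B :: "real^'n^'k"
  shows "A \<bullet> (C ** B) = (A ** transpose B) \<bullet> C"
  unfolding inner_vec_def matrix_matrix_mult_def transpose_def
  by (simp add: sum_distrib_left sum_distrib_right mult_ac sum.swap[of _ "UNIV::'n set"])

lemma matrix_add_rdistrib: "(B + C) ** A = B ** A + C ** A"
  by (vector matrix_matrix_mult_def sum.distrib[symmetric] field_simps)

lemma matrix_diff_ldistrib: "(A :: 'a::ring_1^'n^'k) ** (B - C) = A ** B - A ** C"
  by (vector matrix_matrix_mult_def sum_subtractf[symmetric] field_simps)

lemma matrix_diff_rdistrib: "(B - C) ** (A :: 'a::ring_1^'n^'k) = B ** A - C ** A"
  by (vector matrix_matrix_mult_def sum_subtractf[symmetric] field_simps)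

lemma tendsto_matrix_mult:
  fixes F :: "'a \<Rightarrow> real^'k^'m" and G :: "'a \<Rightarrow> real^'n^'k"
  assumes "(F \<longlongrightarrow> A) net" "(G \<longlongrightarrow> B) net"
  shows "((\<lambda>x. F x ** G x) \<longlongrightarrow> A ** B) net"
  unfolding matrix_matrix_mult_def by (intro tendsto_intros assms)

lemma tendsto_transpose:
  fixes F :: "'a \<Rightarrow> real^'k^'m"
  assumes "(F \<longlongrightarrow> A) net"
  shows "((\<lambda>x. transpose (F x)) \<longlongrightarrow> transpose A) net"
  unfolding transpose_def by (intro tendsto_intros assms)

lemma tendsto_matrix_vector_mult:
  fixes F :: "'a \<Rightarrow> real^'n^'m"
  assumes "(F \<longlongrightarrow> A) net"
  shows "((\<lambda>x. F x *v v) \<longlongrightarrow> A *v v) net"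
  unfolding matrix_vector_mult_def by (intro tendsto_intros assms)

lemma tendsto_det:
  fixes F :: "'a \<Rightarrow> real^'n^'n"
  assumes "(F \<longlongrightarrow> A) net"
  shows "((\<lambda>x. det (F x)) \<longlongrightarrow> det A) net"
  unfolding det_def by (intro tendsto_intros assms)

lemma rank_set_matrix_mult_left: "Z \<in> rank_set r \<Longrightarrow> M ** Z \<in> rank_set r"
  unfolding rank_set_def using rank_mul_le_right[of M Z] by simp

lemma rank_set_matrix_mult_right: "Z \<in> rank_set r \<Longrightarrow> Z ** M \<in> rank_set r"
  unfolding rank_set_def using rank_mul_le_left[of Z M] by simp

lemma bouligand_tangentI_ray:
  fixes Z D :: "'a::real_normed_vector"
  assumes "\<And>t. t > 0 \<Longrightarrow> Z + t *\<^sub>R D \<in> S"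
  shows "D \<in> bouligand_tangent S Z"
proof -
  define t where "t = (\<lambda>k::nat. 1 / real (Suc k))"
  have t0: "t \<longlonglongrightarrow> 0" unfolding t_def by (rule LIMSEQ_Suc[OF lim_const_over_n])
  have tp: "\<forall>k. t k > 0" unfolding t_def by simp
  have "(\<lambda>k. Z + t k *\<^sub>R D) \<longlonglongrightarrow> Z + 0 *\<^sub>R D"
    by (intro tendsto_intros t0)
  moreover have "(\<lambda>k. ((Z + t k *\<^sub>R D) - Z) /\<^sub>R t k) = (\<lambda>k. D)"
    using tp by (auto simp: fun_eq_iff less_imp_neq[symmetric])
  ultimately show ?thesis unfolding bouligand_tangent_def
    using tp assms t0 by (intro CollectI exI[of _ "\<lambda>k. Z + t k *\<^sub>R D"] exI[of _ t]) auto
qed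

lemma frechet_normal_inner_ray_le:
  assumes "W \<in> frechet_normal S Z" "\<And>t. t > 0 \<Longrightarrow> Z + t *\<^sub>R D \<in> S"
  shows "W \<bullet> D \<le> 0"
  using assms bouligand_tangentI_ray unfolding frechet_normal_def by blast

lemma frechet_normal_scaleR:
  "W \<in> frechet_normal S Z \<Longrightarrow> c \<ge> 0 \<Longrightarrow> c *\<^sub>R W \<in> frechet_normal S Z"
  unfolding frechet_normal_def by (auto intro: mult_nonneg_nonpos)

lemma mordukhovich_normal_scaleR:
  assumes "W \<in> mordukhovich_normal S X" "c \<ge> 0"
  shows "c *\<^sub>R W \<in> mordukhovich_normal S X"
proof -
  obtain Xs Ws where h: "\<forall>k. Xs k \<in> S" "Xs \<longlonglongrightarrow> X" "\<forall>k. Ws k \<in> frechet_normal S (Xs k)" "Ws \<longlonglongrightarrow> W"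
    using assms(1) unfolding mordukhovich_normal_def by blast
  have "(\<lambda>k. c *\<^sub>R Ws k) \<longlonglongrightarrow> c *\<^sub>R W" by (intro tendsto_intros h)
  moreover have "\<forall>k. c *\<^sub>R Ws k \<in> frechet_normal S (Xs k)" using h(3) assms(2) frechet_normal_scaleR by blast
  ultimately show ?thesis unfolding mordukhovich_normal_def using h(1,2)
    by (intro CollectI exI[of _ Xs] exI[of _ "\<lambda>k. c *\<^sub>R Ws k"]) simp
qed

text \<open>In the tangent direction \<open>Z C\<close> with \<open>C = Z\<^sup>T W\<close>, resp. \<open>C Z\<close> with \<open>C = W Z\<^sup>T\<close>, the
  inner product with \<open>W\<close> is \<open>\<parallel>C\<parallel>\<^sup>2\<close>.\<close>
lemma frechet_normal_rank_set:
  fixes Z W :: "real^'n^'m"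
  assumes Z: "Z \<in> rank_set r" and W: "W \<in> frechet_normal (rank_set r) Z"
  shows "transpose Z ** W = 0 \<and> W ** transpose Z = 0"
proof
  let ?C = "transpose Z ** W"
  have "Z + t *\<^sub>R (Z ** ?C) = Z ** (mat 1 + t *\<^sub>R ?C)" for t
    by (simp add: matrix_add_ldistrib matrix_scalar_ac scalar_matrix_assoc[symmetric])
  then have "W \<bullet> (Z ** ?C) \<le> 0"
    using frechet_normal_inner_ray_le[OF W] rank_set_matrix_mult_right[OF Z] by metis
  then have "?C \<bullet> ?C \<le> 0" by (simp add: inner_matrix_mult_left)
  then show "?C = 0" by (metis inner_eq_zero_iff inner_ge_zero order_antisym)
next
  let ?C = "W ** transpose Z"
  have "Z + t *\<^sub>R (?C ** Z) = (mat 1 + t *\<^sub>R ?C) ** Z" for t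
    by (simp add: matrix_add_rdistrib scalar_matrix_assoc[symmetric])
  then have "W \<bullet> (?C ** Z) \<le> 0"
    using frechet_normal_inner_ray_le[OF W] rank_set_matrix_mult_left[OF Z] by metis
  then have "?C \<bullet> ?C \<le> 0" by (simp add: inner_matrix_mult_right)
  then show "?C = 0" by (metis inner_eq_zero_iff inner_ge_zero order_antisym)
qed

lemma mordukhovich_normal_rank_set:
  fixes X W :: "real^'n^'m"
  assumes "W \<in> mordukhovich_normal (rank_set r) X"
  shows "transpose X ** W = 0 \<and> W ** transpose X = 0"
proof -
  obtain Xs Ws where h: "\<forall>k. Xs k \<in> rank_set r" "Xs \<longlonglongrightarrow> X"
     "\<forall>k. Ws k \<in> frechet_normal (rank_set r) (Xs k)" "Ws \<longlonglongrightarrow> W"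
    using assms unfolding mordukhovich_normal_def by blast
  have "(\<lambda>k. transpose (Xs k) ** Ws k) \<longlonglongrightarrow> transpose X ** W"
    and "(\<lambda>k. Ws k ** transpose (Xs k)) \<longlonglongrightarrow> W ** transpose X"
    by (intro tendsto_matrix_mult tendsto_transpose h)+
  moreover have "transpose (Xs k) ** Ws k = 0 \<and> Ws k ** transpose (Xs k) = 0" for k
    using frechet_normal_rank_set h by blast
  ultimately show ?thesis by (simp add: LIMSEQ_const_iff)
qed

lemma card_le_rank_if_columns_in_range:
  fixes M :: "real^'m^'m" and B :: "real^'n^'m"
  assumes "det M \<noteq> 0" and C: "\<forall>c\<in>C. column c M \<in> range ((*v) B)"
  shows "card C \<le> rank B"
proof -
  have inj: "inj ((*v) M)" using assms(1) invertible_det_nz inj_matrix_vector_mult by blast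
  define E where "E = (\<lambda>c. axis c (1::real)) ` C"
  have "independent E"
    by (rule independent_mono[OF independent_Basis]) (auto simp: E_def Basis_vec_def)
  then have "independent ((*v) M ` E)"
    using inj by (intro linear_independent_injective_image) (auto intro: inj_on_subset)
  moreover have "(*v) M ` E \<subseteq> range ((*v) B)"
    using C unfolding E_def by (auto simp: matrix_vector_mult_basis)
  ultimately have "card ((*v) M ` E) \<le> rank B"
    unfolding rank_dim_range by (intro independent_card_le_dim)
  moreover have "card ((*v) M ` E) = card C"
    using inj unfolding E_def
    by (subst card_image, fastforce intro: inj_on_subset)
      (auto intro!: card_image simp: inj_on_def axis_eq_axis)
  ultimately show ?thesis by simp
qed

lemma invertible_matrix_extending_range_basis:
  fixes A :: "real^'n^'m"
  obtains M :: "real^'m^'m" and C x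
  where "det M \<noteq> 0" "card C = rank A" "\<forall>c\<in>C. column c M = A *v x c"
proof -
  obtain I where I: "I \<subseteq> range ((*v) A)" "independent I" "range ((*v) A) \<subseteq> span I"
      "card I = rank A"
    unfolding rank_dim_range by (rule basis_exists)
  obtain Bs where Bs: "I \<subseteq> Bs" "Bs \<subseteq> UNIV" "independent Bs" "UNIV \<subseteq> span Bs"
    by (rule maximal_independent_subset_extend[OF subset_UNIV I(2)])
  have "card Bs = dim (span Bs)" by (simp add: dim_span dim_eq_card_independent[OF Bs(3)])
  also have "span Bs = UNIV" using Bs(4) by blast
  finally have "card Bs = CARD('m)" by simp
  then obtain col where col: "bij_betw col (UNIV::'m set) Bs"
    using finite_same_card_bij[of "UNIV::'m set" Bs] independent_bound_general[OF Bs(3)] by auto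
  define M :: "real^'m^'m" where "M = (\<chi> i c. col c $ i)"
  have "columns M = Bs"
    using col unfolding columns_def column_def M_def bij_betw_def by (auto simp: vec_eq_iff)
  then have "rank M = CARD('m)"
    unfolding column_rank_def using dim_eq_card_independent[OF Bs(3)] \<open>card Bs = CARD('m)\<close> by simp
  then have "det M \<noteq> 0" by (simp add: det_eq_0_rank)
  moreover have "card (col -` I) = rank A"
  proof -
    have "col ` (col -` I) = I" using col Bs(1) by (auto simp: bij_betw_def)
    moreover have "inj_on col (col -` I)" using col by (auto simp: bij_betw_def intro: inj_on_subset)
    ultimately show ?thesis using I(4) card_image[of col "col -` I"] by simp
  qed
  moreover have "\<forall>c\<in>col -` I. column c M = A *v (SOME v. A *v v = col c)"
  proof
    fix c assume "c \<in> col -` I"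
    then have ex: "\<exists>v. A *v v = col c" using I(1) by (metis image_iff subsetD vimageE)
    show "column c M = A *v (SOME v. A *v v = col c)"
      unfolding M_def column_def using someI_ex[OF ex] by simp
  qed
  ultimately show ?thesis by (rule that)
qed

text \<open>Replacing the columns \<open>A x\<^sub>c\<close> (\<open>c \<in> C\<close>) of \<open>M\<close> by \<open>As\<^sub>j x\<^sub>c\<close> keeps the determinant
  nonzero for \<open>j\<close> large, so \<open>As\<^sub>j\<close> has \<open>card C\<close> independent vectors in its range.\<close>
lemma rank_eventually_ge:
  fixes As :: "'a \<Rightarrow> real^'n^'m"
  assumes lim: "(As \<longlongrightarrow> A) F"
  shows "\<forall>\<^sub>F j in F. rank A \<le> rank (As j)"
proof -
  obtain M :: "real^'m^'m" and C x
    where M: "det M \<noteq> 0" "card C = rank A" "\<forall>c\<in>C. column c M = A *v x c"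
    by (rule invertible_matrix_extending_range_basis)
  define Ms where "Ms = (\<lambda>j. \<chi> i c. if c \<in> C then (As j *v x c) $ i else M $ i $ c)"
  have "M = (\<chi> i c. if c \<in> C then (A *v x c) $ i else M $ i $ c)"
    using M(3) by (simp add: vec_eq_iff column_def)
  moreover have "(Ms \<longlongrightarrow> (\<chi> i c. if c \<in> C then (A *v x c) $ i else M $ i $ c)) F"
    unfolding Ms_def
    by (intro tendsto_vec_lambda, case_tac "c \<in> C")
      (auto intro: tendsto_vec_nth[OF tendsto_matrix_vector_mult[OF lim]])
  ultimately have "(Ms \<longlongrightarrow> M) F" by simp
  then have "\<forall>\<^sub>F j in F. det (Ms j) \<noteq> 0"
    using tendsto_imp_eventually_ne[OF tendsto_det] M(1) by blast
  then show ?thesis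
  proof (rule eventually_mono)
    fix j assume "det (Ms j) \<noteq> 0"
    moreover have "\<forall>c\<in>C. column c (Ms j) \<in> range ((*v) (As j))"
      by (auto simp: Ms_def column_def vec_eq_iff)
    ultimately show "rank A \<le> rank (As j)"
      using card_le_rank_if_columns_in_range[of "Ms j" C "As j"] M(2) by simp
  qed
qed

lemma closed_rank_set: "closed (rank_set r :: (real^'n^'m) set)"
  unfolding closed_sequential_limits rank_set_def
proof (intro allI impI; elim conjE)
  fix As :: "nat \<Rightarrow> real^'n^'m" and A
  assume As: "\<forall>j. As j \<in> {A. rank A \<le> r}" and "As \<longlonglongrightarrow> A"
  then have "\<forall>\<^sub>F j in sequentially. rank A \<le> rank (As j)" by (intro rank_eventually_ge)
  then obtain j where "rank A \<le> rank (As j)" by (auto simp: eventually_sequentially)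
  then show "A \<in> {A. rank A \<le> r}" using As by (metis mem_Collect_eq order_trans)
qed

lemma pos_strict_mono: "(i::'a::{finite,linorder}) < j \<Longrightarrow> pos i < pos j"
  unfolding pos_def by (rule psubset_card_mono) auto

lemma pos_eq_iff [simp]: "pos (i::'a::{finite,linorder}) = pos j \<longleftrightarrow> i = j"
  by (metis linorder_neqE less_irrefl pos_strict_mono)

lemma pos_less_card: "pos (i::'a::{finite,linorder}) < CARD('a)"
  unfolding pos_def by (rule psubset_card_mono) auto

lemma range_pos: "range (pos :: 'a::{finite,linorder} \<Rightarrow> nat) = {..<CARD('a)}"
proof -
  have "card (range (pos :: 'a \<Rightarrow> nat)) = CARD('a)"
    by (simp add: card_image inj_on_def)
  then show ?thesis
    using pos_less_card by (intro card_subset_eq) auto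
qed

lemma pos_surj: "p < CARD('a::{finite,linorder}) \<Longrightarrow> \<exists>a::'a. pos a = p"
  using range_pos by (metis imageE lessThan_iff)

definition svd_diag :: "nat \<Rightarrow> (nat \<Rightarrow> real) \<Rightarrow> real^'n::{finite,linorder}^'m::{finite,linorder}" where
  "svd_diag s \<sigma> = (\<chi> i j. if pos i = pos j \<and> pos i < s then \<sigma> (pos i) else 0)"

lemma is_svd_iff:
  "is_svd X s U \<sigma> V \<longleftrightarrow> orthogonal_matrix U \<and> orthogonal_matrix V \<and>
     (\<forall>k<s. \<sigma> k > 0) \<and> (\<forall>j k. j \<le> k \<and> k < s \<longrightarrow> \<sigma> k \<le> \<sigma> j) \<and>
     X = U ** svd_diag s \<sigma> ** transpose V"
  unfolding is_svd_def svd_diag_def ..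

lemma svd_diag_column_eq_0: "s \<le> pos j \<Longrightarrow> svd_diag s \<sigma> $ i $ j = 0"
  unfolding svd_diag_def by auto

lemma linear_T_mat: "linear (T_mat s U V)"
  by (rule linearI)
    (simp_all add: T_mat_def vec_eq_iff matrix_add_ldistrib matrix_add_rdistrib
      matrix_scalar_ac scalar_matrix_assoc[symmetric])

text \<open>With \<open>Q = U\<^sup>T W V\<close>, the hypotheses read \<open>\<Sigma>\<^sup>T Q = 0\<close> and \<open>Q \<Sigma>\<^sup>T = 0\<close>; since the leading
  \<open>s\<close> singular values are positive, the first \<open>s\<close> rows and columns of \<open>Q\<close> vanish.\<close>
lemma T_mat_eq_0_if_annihilates:
  fixes X W :: "real^'n::{finite,linorder}^'m::{finite,linorder}"
  assumes svd: "is_svd X s U \<sigma> V" and s: "s \<le> CARD('n)" "s \<le> CARD('m)"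
    and XW: "transpose X ** W = 0" and WX: "W ** transpose X = 0"
  shows "T_mat s U V W = 0"
proof -
  define S :: "real^'n::{finite,linorder}^'m::{finite,linorder}" where "S = svd_diag s \<sigma>"
  define Q where "Q = transpose U ** W ** V"
  have U: "transpose U ** U = mat 1" "U ** transpose U = mat 1"
    and V: "transpose V ** V = mat 1" "V ** transpose V = mat 1"
    and X: "X = U ** S ** transpose V" and \<sigma>: "\<forall>k<s. \<sigma> k > 0"
    using svd unfolding is_svd_iff orthogonal_matrix_def S_def by auto
  have "transpose S ** Q = transpose V ** (transpose X ** W) ** V"
    by (simp add: Q_def X matrix_transpose_mul matrix_mul_assoc V)
  then have SQ: "transpose S ** Q = 0" using XW by simp
  have "Q ** transpose S = transpose U ** (W ** transpose X) ** U"
    by (simp add: Q_def X matrix_transpose_mul matrix_mul_assoc[symmetric] U)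
  then have QS: "Q ** transpose S = 0" using WX by simp
  have "Q $ i $ j = 0" if "pos i < s \<or> pos j < s" for i j
    using that
  proof
    assume i: "pos i < s"
    then obtain b :: 'n where b: "pos b = pos i" using pos_surj s by (metis order_less_le_trans)
    have "(transpose S ** Q) $ b $ j = \<sigma> (pos i) * Q $ i $ j"
      unfolding matrix_matrix_mult_def transpose_def S_def svd_diag_def
      by (simp add: b if_distrib if_distribR cong: if_cong)
        (simp add: i conj_commute[of "_ = i"] cong: conj_cong)
    then show ?thesis using SQ \<sigma> i by (metis less_irrefl mult_eq_0_iff zero_index)
  next
    assume j: "pos j < s"
    then obtain a :: 'm where a: "pos a = pos j" using pos_surj s by (metis order_less_le_trans)
    have "(Q ** transpose S) $ i $ a = \<sigma> (pos j) * Q $ i $ j"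
      unfolding matrix_matrix_mult_def transpose_def S_def svd_diag_def
      by (simp add: a if_distrib if_distribR mult.commute cong: if_cong)
        (simp add: j eq_commute[of j] conj_commute[of "_ = j"] cong: conj_cong)
    then show ?thesis using QS \<sigma> j by (metis less_irrefl mult_eq_0_iff zero_index)
  qed
  then show ?thesis unfolding T_mat_def Q_def by (simp add: vec_eq_iff) (meson not_le)
qed

lemma T_mat_mordukhovich_normal_rank_set:
  fixes X W :: "real^'n::{finite,linorder}^'m::{finite,linorder}"
  assumes "is_svd X (rank X) U \<sigma> V" "W \<in> mordukhovich_normal (rank_set r) X"
  shows "T_mat (rank X) U V W = 0"
  using T_mat_eq_0_if_annihilates[OF assms(1)] mordukhovich_normal_rank_set[OF assms(2)]
    rank_bound[of X]
  by simp

lemma inner_svd_frame: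
  fixes W B :: "real^'n::{finite,linorder}^'m::{finite,linorder}"
  assumes "\<forall>i j. s \<le> pos j \<longrightarrow> B $ i $ j = 0"
  shows "W \<bullet> (U ** B ** transpose V) = T_mat s U V W \<bullet> B"
proof -
  have "W \<bullet> (U ** B ** transpose V) = (transpose U ** W ** V) \<bullet> B"
    using inner_matrix_mult_right[of W "U ** B" "transpose V"] inner_matrix_mult_left[of "W ** V" U B]
    by (simp add: matrix_mul_assoc)
  also have "\<dots> = T_mat s U V W \<bullet> B"
    unfolding inner_vec_def inner_real_def T_mat_def using assms by (intro sum.cong) auto
  finally show ?thesis .
qed

lemma convex_on_gradient_inequality:
  fixes f :: "'a::real_inner \<Rightarrow> real"
  assumes cvx: "convex_on UNIV f" and d: "(f has_derivative (\<lambda>H. g \<bullet> H)) (at X)"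
  shows "f X + g \<bullet> (Y - X) \<le> f Y"
proof -
  define D where "D = Y - X"
  define h where "h = (\<lambda>t::real. f (X + t *\<^sub>R D))"
  have "convex_on UNIV h"
  proof (rule convex_onI)
    fix t a b :: real assume t: "0 < t" "t < 1"
    have "X + ((1 - t) *\<^sub>R a + t *\<^sub>R b) *\<^sub>R D = (1 - t) *\<^sub>R (X + a *\<^sub>R D) + t *\<^sub>R (X + b *\<^sub>R D)"
      by (simp add: algebra_simps)
    then show "h ((1 - t) *\<^sub>R a + t *\<^sub>R b) \<le> (1 - t) * h a + t * h b"
      unfolding h_def using convex_onD[OF cvx, of t] t by simp
  qed simp
  moreover have "(h has_field_derivative (g \<bullet> D)) (at 0)"
  proof -
    have "((\<lambda>t::real. X + t *\<^sub>R D) has_derivative (\<lambda>t. t *\<^sub>R D)) (at 0)"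
      by (auto intro!: derivative_eq_intros)
    moreover have "(f has_derivative (\<lambda>H. g \<bullet> H)) (at (X + 0 *\<^sub>R D))" using d by simp
    ultimately have "(h has_derivative (\<lambda>t. g \<bullet> (t *\<^sub>R D))) (at 0)"
      unfolding h_def by (rule has_derivative_compose)
    moreover have "(\<lambda>t. g \<bullet> (t *\<^sub>R D)) = (*) (g \<bullet> D)" by (auto simp: fun_eq_iff)
    ultimately show ?thesis by (simp add: has_field_derivative_def)
  qed
  ultimately have "h 1 - h 0 \<ge> (g \<bullet> D) * (1 - 0)"
    by (intro convex_on_imp_above_tangent) auto
  then show ?thesis unfolding h_def D_def by simp
qed

lemma M_stationary_imp_minimal_on_M_Gamma:
  fixes f :: "real^'n::{finite,linorder}^'m::{finite,linorder} \<Rightarrow> real"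
  assumes deriv: "(f has_derivative (\<lambda>H. gradf X \<bullet> H)) (at X)"
    and svd: "is_svd X (rank X) U \<sigma> V"
    and cvx: "convex_on UNIV f" and stat: "M_stationary gradf l A b r X"
    and Y: "Y \<in> affine_set l A b \<inter> M_Gamma (rank X) U V"
  shows "f X \<le> f Y"
proof -
  obtain y where W: "- lagrangian_grad gradf l A X y \<in> mordukhovich_normal (rank_set r) X"
    and XL: "X \<in> affine_set l A b"
    using stat unfolding M_stationary_def by blast
  obtain B where B: "Y = U ** B ** transpose V" "\<forall>i j. rank X \<le> pos j \<longrightarrow> B $ i $ j = 0"
    using Y unfolding M_Gamma_def by blast
  have X: "X = U ** svd_diag (rank X) \<sigma> ** transpose V" using svd unfolding is_svd_iff by blast
  define D where "D = B - svd_diag (rank X) \<sigma>"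
  have YX: "Y - X = U ** D ** transpose V"
    unfolding B(1) D_def by (subst X) (simp add: matrix_diff_ldistrib matrix_diff_rdistrib)
  have "\<forall>i j. rank X \<le> pos j \<longrightarrow> D $ i $ j = 0"
    using B(2) svd_diag_column_eq_0 unfolding D_def by auto
  then have "- lagrangian_grad gradf l A X y \<bullet> (Y - X) = 0"
    unfolding YX
    by (simp only: inner_svd_frame T_mat_mordukhovich_normal_rank_set[OF svd W] inner_zero_left)
  moreover have "A i \<bullet> (Y - X) = 0" if "i < l" for i
    using Y XL that unfolding affine_set_def by (simp add: inner_diff_right)
  ultimately have "gradf X \<bullet> (Y - X) = 0"
    unfolding lagrangian_grad_def by (simp add: inner_diff_left inner_sum_left)
  then show ?thesis using convex_on_gradient_inequality[OF cvx deriv, of Y] by simp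
qed

lemma frechet_normal_at_local_min:
  fixes \<phi> :: "'a::real_inner \<Rightarrow> real"
  assumes "\<rho> > 0" and mn: "\<forall>Y\<in>S. dist Y Z < \<rho> \<longrightarrow> \<phi> Z \<le> \<phi> Y"
    and d: "(\<phi> has_derivative (\<lambda>H. g \<bullet> H)) (at Z)"
  shows "- g \<in> frechet_normal S Z"
  unfolding frechet_normal_def
proof (intro CollectI ballI)
  fix \<Xi> assume "\<Xi> \<in> bouligand_tangent S Z"
  then obtain Xs t where h: "\<forall>k. Xs k \<in> S" "Xs \<longlonglongrightarrow> Z" "\<forall>k. t k > 0" "t \<longlonglongrightarrow> 0"
    "(\<lambda>k. (Xs k - Z) /\<^sub>R t k) \<longlonglongrightarrow> \<Xi>"
    unfolding bouligand_tangent_def by blast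
  define R where "R = (\<lambda>y. ((\<phi> y - \<phi> Z) - g \<bullet> (y - Z)) / norm (y - Z))"
  have "(R \<longlongrightarrow> 0) (at Z)"
    using d unfolding has_derivative_at_within R_def by (simp add: divide_inverse mult.commute)
  moreover have "R Z = 0" unfolding R_def by simp
  ultimately have "(\<lambda>k. R (Xs k)) \<longlonglongrightarrow> 0"
    using isCont_tendsto_compose[OF _ h(2)] unfolding isCont_def by metis
  then have "(\<lambda>k. g \<bullet> ((Xs k - Z) /\<^sub>R t k) + R (Xs k) * norm ((Xs k - Z) /\<^sub>R t k))
      \<longlonglongrightarrow> g \<bullet> \<Xi> + 0 * norm \<Xi>"
    by (intro tendsto_intros h)
  moreover have "(\<phi> (Xs k) - \<phi> Z) / t k
      = g \<bullet> ((Xs k - Z) /\<^sub>R t k) + R (Xs k) * norm ((Xs k - Z) /\<^sub>R t k)" for k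
  proof (cases "Xs k = Z")
    case False
    have "t k > 0" using h(3) by blast
    then have n: "norm ((Xs k - Z) /\<^sub>R t k) = norm (Xs k - Z) / t k"
      and g: "g \<bullet> ((Xs k - Z) /\<^sub>R t k) = (g \<bullet> (Xs k - Z)) / t k"
      by (simp_all add: divide_inverse mult.commute)
    show ?thesis using False \<open>t k > 0\<close> unfolding n g R_def by (simp add: field_simps)
  qed (simp add: R_def)
  ultimately have lim: "(\<lambda>k. (\<phi> (Xs k) - \<phi> Z) / t k) \<longlonglongrightarrow> g \<bullet> \<Xi>" by simp
  have "\<forall>\<^sub>F k in sequentially. dist (Xs k) Z < \<rho>"
    using h(2) \<open>\<rho> > 0\<close> by (rule tendstoD)
  then have "\<forall>\<^sub>F k in sequentially. 0 \<le> (\<phi> (Xs k) - \<phi> Z) / t k"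
    by eventually_elim (use mn h(1,3) in \<open>simp add: less_imp_le\<close>)
  then have "0 \<le> g \<bullet> \<Xi>" using lim by (intro tendsto_lowerbound) auto
  then show "- g \<bullet> \<Xi> \<le> 0" by simp
qed

lemma has_derivative_penalized_objective:
  fixes f :: "'a::real_inner \<Rightarrow> real"
  assumes df: "(f has_derivative (\<lambda>H. g \<bullet> H)) (at Z)"
  shows "((\<lambda>Y. f Y + c * (\<Sum>i<l. (A i \<bullet> Y - b i)\<^sup>2) + (Y - X) \<bullet> (Y - X)) has_derivative
     (\<lambda>H. (g + (\<Sum>i<l. (2 * c * (A i \<bullet> Z - b i)) *\<^sub>R A i) + 2 *\<^sub>R (Z - X)) \<bullet> H)) (at Z)"
proof -
  have "((\<lambda>Y. f Y + c * (\<Sum>i<l. (A i \<bullet> Y - b i)\<^sup>2) + (Y - X) \<bullet> (Y - X)) has_derivative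
     (\<lambda>H. g \<bullet> H + c * (\<Sum>i<l. 2 * (A i \<bullet> Z - b i) * (A i \<bullet> H)) + ((Z - X) \<bullet> H + H \<bullet> (Z - X)))) (at Z)"
    by (auto intro!: derivative_eq_intros df simp: power2_eq_square algebra_simps)
  moreover have "(\<lambda>H. g \<bullet> H + c * (\<Sum>i<l. 2 * (A i \<bullet> Z - b i) * (A i \<bullet> H)) + ((Z - X) \<bullet> H + H \<bullet> (Z - X)))
     = (\<lambda>H. (g + (\<Sum>i<l. (2 * c * (A i \<bullet> Z - b i)) *\<^sub>R A i) + 2 *\<^sub>R (Z - X)) \<bullet> H)"
    by (simp add: fun_eq_iff inner_add_left inner_sum_left sum_distrib_left inner_commute[of _ "Z - X"] mult_ac)
  ultimately show ?thesis by simp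
qed

lemma penalty_cluster_point_eq:
  fixes f pen :: "'a::euclidean_space \<Rightarrow> real"
  assumes "l \<in> K" "\<And>k. Zs k \<in> K" "strict_mono q" and lim: "(Zs \<circ> q) \<longlonglongrightarrow> l"
    and cf: "continuous_on K f" and cp: "continuous_on K pen" and p0: "\<And>Y. Y \<in> K \<Longrightarrow> pen Y \<ge> 0"
    and mn: "\<And>Y. Y \<in> K \<Longrightarrow> pen Y = 0 \<Longrightarrow> f X \<le> f Y"
    and dist_bound: "\<And>k. f (Zs k) + (Zs k - X) \<bullet> (Zs k - X) \<le> f X"
    and pen_bound: "\<And>k. real k * pen (Zs k) \<le> M"
  shows "l = X"
proof -
  have q: "filterlim (\<lambda>j. real (q j)) at_top sequentially"
    by (intro filterlim_compose[OF filterlim_real_sequentially] filterlim_subseq assms(3))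
  have "\<forall>\<^sub>F j in sequentially. pen (Zs (q j)) \<le> M / real (q j)"
    using filterlim_at_top_dense[THEN iffD1, OF q, rule_format, of 0]
    by eventually_elim (use pen_bound in \<open>simp add: field_simps mult.commute\<close>)
  moreover have "(\<lambda>j. M / real (q j)) \<longlonglongrightarrow> 0"
    using q by (intro tendsto_divide_0[OF tendsto_const] filterlim_at_top_imp_at_infinity)
  moreover have "(\<lambda>j. pen (Zs (q j))) \<longlonglongrightarrow> pen l"
    using continuous_on_tendsto_compose[OF cp lim \<open>l \<in> K\<close>] assms(2) by (simp add: comp_def)
  ultimately have "pen l \<le> 0" by (intro tendsto_le[OF trivial_limit_sequentially]) auto
  then have "f X \<le> f l" using mn p0 \<open>l \<in> K\<close> by (simp add: order_antisym)
  have "(\<lambda>j. f (Zs (q j)) + (Zs (q j) - X) \<bullet> (Zs (q j) - X)) \<longlonglongrightarrow> f l + (l - X) \<bullet> (l - X)"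
    using continuous_on_tendsto_compose[OF cf lim \<open>l \<in> K\<close>] lim assms(2)
    by (intro tendsto_intros) (auto simp: comp_def)
  then have "f l + (l - X) \<bullet> (l - X) \<le> f X"
    using dist_bound by (intro tendsto_le[OF trivial_limit_sequentially tendsto_const]) auto
  then have "(l - X) \<bullet> (l - X) \<le> 0" using \<open>f X \<le> f l\<close> by simp
  then show "l = X" by (metis inner_eq_zero_iff inner_ge_zero order_antisym eq_iff_diff_eq_0)
qed

lemma penalized_minimizers_tendsto:
  fixes f pen :: "'a::euclidean_space \<Rightarrow> real"
  assumes K: "compact K" "X \<in> K" and cf: "continuous_on K f" and cp: "continuous_on K pen"
    and p0: "\<And>Y. Y \<in> K \<Longrightarrow> pen Y \<ge> 0" and pX: "pen X = 0"
    and mn: "\<And>Y. Y \<in> K \<Longrightarrow> pen Y = 0 \<Longrightarrow> f X \<le> f Y"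
  obtains Zs q where "Zs \<longlonglongrightarrow> X" "\<And>j. Zs j \<in> K" "strict_mono q"
    "\<And>j Y. Y \<in> K \<Longrightarrow> f (Zs j) + real (q j) * pen (Zs j) + (Zs j - X) \<bullet> (Zs j - X)
        \<le> f Y + real (q j) * pen Y + (Y - X) \<bullet> (Y - X)"
proof -
  define \<phi> where "\<phi> = (\<lambda>k::nat. \<lambda>Y. f Y + real k * pen Y + (Y - X) \<bullet> (Y - X))"
  have "\<exists>Z\<in>K. \<forall>Y\<in>K. \<phi> k Z \<le> \<phi> k Y" for k
  proof (rule continuous_attains_inf[OF K(1)])
    show "continuous_on K (\<phi> k)" unfolding \<phi>_def by (intro continuous_intros cf cp)
  qed (use K(2) in auto)
  then obtain Zs where Zs: "\<And>k. Zs k \<in> K" "\<And>k Y. Y \<in> K \<Longrightarrow> \<phi> k (Zs k) \<le> \<phi> k Y"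
    by metis
  obtain m where m: "\<And>Y. Y \<in> K \<Longrightarrow> m \<le> f Y"
    using continuous_attains_inf[OF K(1) _ cf] K(2) by blast
  have min_X: "f (Zs k) + real k * pen (Zs k) + (Zs k - X) \<bullet> (Zs k - X) \<le> f X" for k
    using Zs(2)[OF K(2), of k] unfolding \<phi>_def pX by simp
  have dist_bound: "f (Zs k) + (Zs k - X) \<bullet> (Zs k - X) \<le> f X" for k
    using min_X[of k] p0[OF Zs(1)] by (smt (verit) of_nat_0_le_iff split_mult_pos_le)
  have pen_bound: "real k * pen (Zs k) \<le> f X - m" for k
    using min_X[of k] m[OF Zs(1)[of k]] inner_ge_zero[of "Zs k - X"] by linarith
  obtain l q where "l \<in> K" "strict_mono q" "(Zs \<circ> q) \<longlonglongrightarrow> l"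
    using compact_imp_seq_compact[OF K(1), THEN seq_compactE, of Zs] Zs(1) by blast
  then have "l = X"
    by (rule penalty_cluster_point_eq[where M="f X - m", OF _ Zs(1) _ _ cf cp p0 mn dist_bound pen_bound])
  with \<open>strict_mono q\<close> \<open>(Zs \<circ> q) \<longlonglongrightarrow> l\<close> show ?thesis
    using that[of "Zs \<circ> q" q] Zs unfolding \<phi>_def by (simp add: comp_def)
qed

lemma penalized_frechet_normals:
  fixes f :: "'a::euclidean_space \<Rightarrow> real" and A :: "nat \<Rightarrow> 'a" and l :: nat
  assumes \<Omega>: "closed \<Omega>" and deriv: "\<And>Z. (f has_derivative (\<lambda>H. gradf Z \<bullet> H)) (at Z)"
    and X: "X \<in> \<Omega>" "\<forall>i<l. A i \<bullet> X = b i" and "\<epsilon> > 0"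
    and mn: "\<forall>Y\<in>\<Omega>. (\<forall>i<l. A i \<bullet> Y = b i) \<longrightarrow> dist Y X < \<epsilon> \<longrightarrow> f X \<le> f Y"
  obtains Z y where "Z \<longlonglongrightarrow> X" "\<And>j. Z j \<in> \<Omega>"
    "\<And>j. - (gradf (Z j) + 2 *\<^sub>R (Z j - X) + (\<Sum>i<l. y j i *\<^sub>R A i)) \<in> frechet_normal \<Omega> (Z j)"
proof -
  define \<delta> where "\<delta> = \<epsilon> / 2"
  define K where "K = cball X \<delta> \<inter> \<Omega>"
  define pen where "pen = (\<lambda>Y. \<Sum>i<l. (A i \<bullet> Y - b i)\<^sup>2)"
  have "compact K" unfolding K_def by (intro compact_Int_closed compact_cball \<Omega>)
  moreover have "X \<in> K" unfolding K_def \<delta>_def using X \<open>\<epsilon> > 0\<close> by simp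
  moreover have "continuous_on K f"
    using deriv has_derivative_continuous continuous_at_imp_continuous_on by blast
  moreover have "continuous_on K pen" unfolding pen_def by (intro continuous_intros)
  moreover have "pen Y \<ge> 0" for Y unfolding pen_def by (intro sum_nonneg) simp
  moreover have "pen X = 0" using X unfolding pen_def by simp
  moreover have "f X \<le> f Y" if "Y \<in> K" "pen Y = 0" for Y
  proof -
    have "\<forall>i\<in>{..<l}. (A i \<bullet> Y - b i)\<^sup>2 = 0"
      using that(2) sum_nonneg_eq_0_iff[of "{..<l}" "\<lambda>i. (A i \<bullet> Y - b i)\<^sup>2"]
      unfolding pen_def by simp
    then have "\<forall>i<l. A i \<bullet> Y = b i" by simp
    moreover have "dist Y X < \<epsilon>" using that(1) \<open>\<epsilon> > 0\<close> unfolding K_def \<delta>_def by (simp add: dist_commute)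
    ultimately show ?thesis using mn that(1) unfolding K_def by blast
  qed
  ultimately obtain Zs q where ZX: "Zs \<longlonglongrightarrow> X" and ZK: "\<And>j. Zs j \<in> K" and "strict_mono q"
    and Zmin: "\<And>j Y. Y \<in> K \<Longrightarrow> f (Zs j) + real (q j) * pen (Zs j) + (Zs j - X) \<bullet> (Zs j - X)
        \<le> f Y + real (q j) * pen Y + (Y - X) \<bullet> (Y - X)"
    using penalized_minimizers_tendsto by metis
  obtain N where N: "\<And>j. j \<ge> N \<Longrightarrow> dist (Zs j) X < \<delta> / 2"
    using ZX \<open>\<epsilon> > 0\<close> unfolding LIMSEQ_def \<delta>_def by (metis half_gt_zero)
  define Z where "Z j = Zs (j + N)" for j
  have "- (gradf (Z j) + (\<Sum>i<l. (2 * real (q (j + N)) * (A i \<bullet> Z j - b i)) *\<^sub>R A i) + 2 *\<^sub>R (Z j - X))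
      \<in> frechet_normal \<Omega> (Z j)" for j
  proof (rule frechet_normal_at_local_min)
    show "\<delta> / 2 > 0" using \<open>\<epsilon> > 0\<close> unfolding \<delta>_def by simp
    \<comment> \<open>points of \<open>\<Omega>\<close> near \<open>Z j\<close> lie in \<open>K\<close>, where \<open>Z j\<close> is a global minimizer\<close>
    have "Y \<in> K" if "Y \<in> \<Omega>" "dist Y (Z j) < \<delta> / 2" for Y
      using that N[of "j + N"] dist_triangle[of Y X "Z j"] unfolding K_def Z_def
      by (simp add: dist_commute)
    then show "\<forall>Y\<in>\<Omega>. dist Y (Z j) < \<delta> / 2 \<longrightarrow>
        (\<lambda>Y. f Y + real (q (j + N)) * (\<Sum>i<l. (A i \<bullet> Y - b i)\<^sup>2) + (Y - X) \<bullet> (Y - X)) (Z j)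
        \<le> (\<lambda>Y. f Y + real (q (j + N)) * (\<Sum>i<l. (A i \<bullet> Y - b i)\<^sup>2) + (Y - X) \<bullet> (Y - X)) Y"
      using Zmin unfolding Z_def pen_def by simp
  qed (rule has_derivative_penalized_objective[OF deriv])
  moreover have "Z \<longlonglongrightarrow> X" unfolding Z_def using ZX by (rule LIMSEQ_ignore_initial_segment)
  moreover have "Z j \<in> \<Omega>" for j using ZK unfolding Z_def K_def by blast
  ultimately show ?thesis
    using that[of Z "\<lambda>j i. 2 * real (q (j + N)) * (A i \<bullet> Z j - b i)"] by (simp add: add_ac)
qed

lemma subspace_range_lincomb: "subspace (range (\<lambda>y. \<Sum>i\<in>I. y i *\<^sub>R (A i :: 'a::real_vector)))"
  unfolding subspace_def
  by (auto simp: sum.distrib scaleR_add_left scaleR_sum_right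
      intro: range_eqI[of _ _ "\<lambda>i. 0"] range_eqI[where x="\<lambda>i. _ i + _ i"] range_eqI[where x="\<lambda>i. _ * _ i"])

text \<open>Dividing the Fr\'echet normals \<open>-(Hs j + Ss j)\<close> by \<open>max 1 \<parallel>Ss j\<parallel>\<close> makes them bounded;
  a cluster point is a limiting normal \<open>-(\<tau> H + T)\<close>, and \<open>\<tau> = 0\<close> only if \<open>\<parallel>Ss j\<parallel>\<close> blows up,
  in which case \<open>\<parallel>T\<parallel> = 1\<close>.\<close>
lemma mordukhovich_normal_of_normalized_limit:
  fixes S :: "'a::euclidean_space set"
  assumes "subspace S" and Z: "Z \<longlonglongrightarrow> X" "\<And>j. Z j \<in> \<Omega>" and H: "Hs \<longlonglongrightarrow> H" and "\<And>j. Ss j \<in> S"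
    and normal: "\<And>j. - (Hs j + Ss j) \<in> frechet_normal \<Omega> (Z j)"
  obtains \<tau> T where "\<tau> \<ge> 0" "T \<in> S" "\<tau> = 0 \<Longrightarrow> norm T = 1"
    "- (\<tau> *\<^sub>R H + T) \<in> mordukhovich_normal \<Omega> X"
proof -
  define c where "c j = max 1 (norm (Ss j))" for j
  have c: "c j \<ge> 1" "norm ((1 / c j) *\<^sub>R Ss j) \<le> 1" "1 / c j \<le> 1" for j
    unfolding c_def by (auto simp: field_simps)
  have "((1 / c j) *\<^sub>R Ss j, 1 / c j) \<in> cball 0 1 \<times> {0..1}" for j
    using c[of j] order_trans[OF zero_le_one c(1)[of j]] by (simp del: norm_scaleR)
  then have "\<forall>j. ((1 / c j) *\<^sub>R Ss j, 1 / c j) \<in> cball 0 1 \<times> {0..1}" by blast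
  then obtain P r where "P \<in> cball 0 1 \<times> {0..1}" "strict_mono r"
    and lim: "((\<lambda>j. ((1 / c j) *\<^sub>R Ss j, 1 / c j)) \<circ> r) \<longlonglongrightarrow> P"
    by (rule seq_compactE[OF compact_imp_seq_compact[OF compact_Times[OF compact_cball compact_Icc]]])
  obtain T \<tau> where P: "P = (T, \<tau>)" by (cases P)
  have T: "(\<lambda>j. (1 / c (r j)) *\<^sub>R Ss (r j)) \<longlonglongrightarrow> T" and \<tau>: "(\<lambda>j. 1 / c (r j)) \<longlonglongrightarrow> \<tau>"
    using tendsto_fst[OF lim] tendsto_snd[OF lim] unfolding P comp_def by simp_all
  have "\<tau> \<ge> 0" using \<open>P \<in> _\<close> unfolding P by simp
  moreover have "T \<in> S"
    using closed_sequentially[OF closed_subspace[OF \<open>subspace S\<close>] _ T] \<open>subspace S\<close> \<open>\<And>j. Ss j \<in> S\<close>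
    by (simp add: subspace_scale)
  moreover have "norm T = 1" if "\<tau> = 0"
  proof -
    have "\<forall>\<^sub>F j in sequentially. 1 / c (r j) < 1"
      using that by (intro order_tendstoD(2)[OF \<tau>]) simp
    then have "\<forall>\<^sub>F j in sequentially. norm ((1 / c (r j)) *\<^sub>R Ss (r j)) = 1"
    proof (rule eventually_mono)
      fix j assume "1 / c (r j) < 1"
      then have "c (r j) > 1" using c(1)[of "r j"] by (simp add: field_simps)
      then have "c (r j) = norm (Ss (r j))" unfolding c_def by linarith
      moreover have "Ss (r j) \<noteq> 0" using calculation \<open>c (r j) > 1\<close> by auto
      ultimately show "norm ((1 / c (r j)) *\<^sub>R Ss (r j)) = 1" by simp
    qed
    then have "(\<lambda>j. norm ((1 / c (r j)) *\<^sub>R Ss (r j))) \<longlonglongrightarrow> 1" by (rule tendsto_eventually)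
    then show ?thesis using tendsto_norm[OF T] LIMSEQ_unique by blast
  qed
  moreover have "- (\<tau> *\<^sub>R H + T) \<in> mordukhovich_normal \<Omega> X"
  proof -
    have "(\<lambda>j. Z (r j)) \<longlonglongrightarrow> X"
      using LIMSEQ_subseq_LIMSEQ[OF Z(1) \<open>strict_mono r\<close>] by (simp add: comp_def)
    moreover have "(\<lambda>j. (1 / c (r j)) *\<^sub>R (Hs (r j) + Ss (r j))) \<longlonglongrightarrow> \<tau> *\<^sub>R H + T"
      using tendsto_add[OF tendsto_scaleR[OF \<tau> LIMSEQ_subseq_LIMSEQ[OF H \<open>strict_mono r\<close>]] T]
      by (simp add: comp_def scaleR_add_right)
    from tendsto_minus[OF this]
    have "(\<lambda>j. (1 / c (r j)) *\<^sub>R - (Hs (r j) + Ss (r j))) \<longlonglongrightarrow> - (\<tau> *\<^sub>R H + T)"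
      by (simp only: scaleR_minus_right)
    moreover have "(1 / c (r j)) *\<^sub>R - (Hs (r j) + Ss (r j)) \<in> frechet_normal \<Omega> (Z (r j))" for j
      using normal c(1)[of "r j"] by (intro frechet_normal_scaleR) simp_all
    ultimately show ?thesis
      unfolding mordukhovich_normal_def using Z(2)
      by (intro CollectI exI[of _ "\<lambda>j. Z (r j)"] exI[of _ "\<lambda>j. (1 / c (r j)) *\<^sub>R - (Hs (r j) + Ss (r j))"])
        simp
  qed
  ultimately show ?thesis by (rule that)
qed

theorem fritz_john_mordukhovich_normal:
  fixes f :: "'a::euclidean_space \<Rightarrow> real" and A :: "nat \<Rightarrow> 'a" and l :: nat
  assumes \<Omega>: "closed \<Omega>" and deriv: "\<And>Z. (f has_derivative (\<lambda>H. gradf Z \<bullet> H)) (at Z)"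
    and cont: "continuous_on UNIV gradf"
    and X: "X \<in> \<Omega>" "\<forall>i<l. A i \<bullet> X = b i"
    and local_min: "\<exists>\<epsilon>>0. \<forall>Y\<in>\<Omega>. (\<forall>i<l. A i \<bullet> Y = b i) \<longrightarrow> dist Y X < \<epsilon> \<longrightarrow> f X \<le> f Y"
  shows "(\<exists>y. - (gradf X + (\<Sum>i<l. y i *\<^sub>R A i)) \<in> mordukhovich_normal \<Omega> X) \<or>
    (\<exists>y. (\<Sum>i<l. y i *\<^sub>R A i) \<noteq> 0 \<and> - (\<Sum>i<l. y i *\<^sub>R A i) \<in> mordukhovich_normal \<Omega> X)"
proof -
  obtain \<epsilon> where "\<epsilon> > 0" and mn: "\<forall>Y\<in>\<Omega>. (\<forall>i<l. A i \<bullet> Y = b i) \<longrightarrow> dist Y X < \<epsilon> \<longrightarrow> f X \<le> f Y"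
    using local_min by blast
  obtain Z y where Z: "Z \<longlonglongrightarrow> X" "\<And>j. Z j \<in> \<Omega>"
    and normal: "\<And>j. - (gradf (Z j) + 2 *\<^sub>R (Z j - X) + (\<Sum>i<l. y j i *\<^sub>R A i)) \<in> frechet_normal \<Omega> (Z j)"
    by (rule penalized_frechet_normals[OF \<Omega> deriv X \<open>\<epsilon> > 0\<close> mn]) blast
  have "(\<lambda>j. gradf (Z j) + 2 *\<^sub>R (Z j - X)) \<longlonglongrightarrow> gradf X + 2 *\<^sub>R (X - X)"
    by (intro tendsto_intros continuous_on_tendsto_compose[OF cont Z(1)] Z(1)) auto
  then have H: "(\<lambda>j. gradf (Z j) + 2 *\<^sub>R (Z j - X)) \<longlonglongrightarrow> gradf X" by simp
  have S: "(\<Sum>i<l. y j i *\<^sub>R A i) \<in> range (\<lambda>y. \<Sum>i<l. y i *\<^sub>R A i)" for j by blast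
  obtain \<tau> T where "\<tau> \<ge> 0" "T \<in> range (\<lambda>y. \<Sum>i<l. y i *\<^sub>R A i)" "\<tau> = 0 \<Longrightarrow> norm T = 1"
    and MN: "- (\<tau> *\<^sub>R gradf X + T) \<in> mordukhovich_normal \<Omega> X"
    by (rule mordukhovich_normal_of_normalized_limit[OF subspace_range_lincomb Z H S normal]) blast
  then obtain a where T: "T = (\<Sum>i<l. a i *\<^sub>R A i)" by blast
  show ?thesis
  proof (cases "\<tau> = 0")
    case True
    then have "T \<noteq> 0" "- T \<in> mordukhovich_normal \<Omega> X"
      using MN \<open>\<tau> = 0 \<Longrightarrow> norm T = 1\<close> by auto
    then show ?thesis unfolding T by blast
  next
    case False
    with \<open>\<tau> \<ge> 0\<close> have "(1 / \<tau>) *\<^sub>R - (\<tau> *\<^sub>R gradf X + T) \<in> mordukhovich_normal \<Omega> X"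
      using mordukhovich_normal_scaleR[OF MN] by simp
    moreover have "(1 / \<tau>) *\<^sub>R - (\<tau> *\<^sub>R gradf X + T) = - (gradf X + (\<Sum>i<l. (a i / \<tau>) *\<^sub>R A i))"
      using False unfolding T by (simp add: scaleR_diff_right scaleR_sum_right)
    ultimately show ?thesis by metis
  qed
qed

lemma local_minimizer_imp_M_stationary:
  fixes f :: "real^'n::{finite,linorder}^'m::{finite,linorder} \<Rightarrow> real"
  assumes deriv: "\<And>Z. (f has_derivative (\<lambda>H. gradf Z \<bullet> H)) (at Z)"
    and cont: "continuous_on UNIV gradf"
    and svd: "is_svd X (rank X) U \<sigma> V"
    and local_min: "local_minimizer f l A b r X" and a1: "assumption1 (rank X) U V l A"
  shows "M_stationary gradf l A b r X"
proof -
  have XL: "\<forall>i<l. A i \<bullet> X = b i" and Xr: "X \<in> rank_set r"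
    and min: "\<exists>\<epsilon>>0. \<forall>Y\<in>rank_set r. (\<forall>i<l. A i \<bullet> Y = b i) \<longrightarrow> dist Y X < \<epsilon> \<longrightarrow> f X \<le> f Y"
    using local_min unfolding local_minimizer_def affine_set_def by auto
  note FJ = fritz_john_mordukhovich_normal[OF closed_rank_set deriv cont Xr XL min]
  have "(\<Sum>i<l. y i *\<^sub>R A i) = 0" if "- (\<Sum>i<l. y i *\<^sub>R A i) \<in> mordukhovich_normal (rank_set r) X" for y
  proof -
    have "(\<Sum>i<l. (- y i) *\<^sub>R T_mat (rank X) U V (A i)) = - T_mat (rank X) U V (\<Sum>i<l. y i *\<^sub>R A i)"
      by (simp add: linear_sum[OF linear_T_mat] linear_cmul[OF linear_T_mat] sum_negf)
    also have "\<dots> = 0"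
      using T_mat_mordukhovich_normal_rank_set[OF svd that] by (simp add: linear_neg[OF linear_T_mat])
    finally show ?thesis using a1 unfolding assumption1_def by fastforce
  qed
  then show ?thesis
    using FJ XL Xr unfolding affine_set_def M_stationary_def lagrangian_grad_def by auto
qed

theorem corollary4p1:
  fixes f :: "real^'n::{finite,linorder}^'m::{finite,linorder} \<Rightarrow> real"
    and gradf :: "real^'n::{finite,linorder}^'m::{finite,linorder} \<Rightarrow> real^'n::{finite,linorder}^'m::{finite,linorder}"
    and A :: "nat \<Rightarrow> real^'n::{finite,linorder}^'m::{finite,linorder}" and b :: "nat \<Rightarrow> real" and l r s :: nat
    and X :: "real^'n::{finite,linorder}^'m::{finite,linorder}" and U :: "real^'m::{finite,linorder}^'m::{finite,linorder}" and V :: "real^'n::{finite,linorder}^'n::{finite,linorder}" and \<sigma> :: "nat \<Rightarrow> real"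
  assumes dims: "r < CARD('n)" "CARD('n) \<le> CARD('m)"
    and deriv: "\<And>Z. (f has_derivative (\<lambda>H. gradf Z \<bullet> H)) (at Z)"
    and cont: "continuous_on UNIV gradf"
    and feas: "X \<in> affine_set l A b \<inter> rank_set r"
    and srank: "s = rank X"
    and svd: "is_svd X s U \<sigma> V"
  shows "(local_minimizer f l A b r X \<and> assumption1 s U V l A \<longrightarrow> M_stationary gradf l A b r X)
       \<and> (convex_on UNIV f \<and> M_stationary gradf l A b r X \<longrightarrow>
            (\<forall>Y\<in>affine_set l A b \<inter> M_Gamma s U V. f X \<le> f Y))"
proof -
  have svd': "is_svd X (rank X) U \<sigma> V" using svd srank by simp
  show ?thesis
  proof (intro conjI impI ballI; elim conjE)
    assume "local_minimizer f l A b r X" "assumption1 s U V l A"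
    then show "M_stationary gradf l A b r X"
      using local_minimizer_imp_M_stationary[OF deriv cont svd'] srank by simp
  next
    fix Y assume "Y \<in> affine_set l A b \<inter> M_Gamma s U V" "convex_on UNIV f" "M_stationary gradf l A b r X"
    then show "f X \<le> f Y"
      using M_stationary_imp_minimal_on_M_Gamma[where gradf = gradf, OF deriv svd'] srank by simp
  qed
qed

end
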